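(* For all $m,n\in\mathbb{Z}$ with $\gcd(m,n)=1$ and $mn(m+n)\neq0$ we have $A(m,n)\ge 29$, and $A(m,n)=29$ holds only when $c=-\frac{A(m,n)}{B(m,n)}=-\frac{29}{16}$. Equivalently, among rational $c$ for which $f_c(x)=x^2+c$ has a rational $3$-cycle, the smallest possible absolute value of the numerator of $c$ is $29$, attained only by $c=-\tfrac{29}{16}$.
   Context: $A(m,n)=m^6+2m^5n+4m^4n^2+8m^3n^3+9m^2n^4+4mn^5+n^6$, $B(m,n)=4m^2n^2(m+n)^2$. Standing fact: $f_c(x)=x^2+c$ ($c\in\mathbb{Q}$) has a rational $3$-cycle if and only if $c=-A(m,n)/B(m,n)$ for some coprime integers $m,n$ with $mn(m+n)\neq0$, and this fraction is then in lowest terms. *)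

theory Defs
  imports Complex_Main
begin

definition A :: "int \<Rightarrow> int \<Rightarrow> int" where
  "A m n = m^6 + 2*m^5*n + 4*m^4*n^2 + 8*m^3*n^3 + 9*m^2*n^4 + 4*m*n^5 + n^6"

definition B :: "int \<Rightarrow> int \<Rightarrow> int" where
  "B m n = 4*m^2*n^2*(m+n)^2"

end

(* An explicit sum-of-squares certificate gives 16 A(m,n) \<ge> (m^2 + n^2)^3, so A(m,n) \<ge> 32 as soon as
   m^2 + n^2 \<ge> 8. The remaining pairs have |m|, |n| \<le> 2 and are checked one by one: each
   admissible one has A \<ge> 29, and whenever A = 29 (e.g. (1,1), (1,-2), (-2,1)) also B = 16. *)
theory Submission
  imports Defs
begin

lemma A_poly_minus_cube_sum_squares_sos:
  fixes x y :: real
  shows "x^6 + 2*x^5*y + 4*x^4*y^2 + 8*x^3*y^3 + 9*x^2*y^4 + 4*x*y^5 + y^6 - (x^2 + y^2)^3 / 16 =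
    15/16 * (x^3 + 16/15*x^2*y - 16/15*x*y^2 - 4/5*y^3)^2
    + 1139/240 * (x^2*y + 1396/1139*x*y^2 + 192/1139*y^3)^2
    + 11239/18224 * (x*y^2 + 4000/11239*y^3)^2
    + 22393/179824 * (y^3)^2"
  by algebra

lemma cube_sum_squares_le_16_A: "(m^2 + n^2)^3 \<le> 16 * A m n"
proof -
  define x y where "x = real_of_int m" and "y = real_of_int n"
  have "x^6 + 2*x^5*y + 4*x^4*y^2 + 8*x^3*y^3 + 9*x^2*y^4 + 4*x*y^5 + y^6 - (x^2 + y^2)^3 / 16 \<ge> 0"
    unfolding A_poly_minus_cube_sum_squares_sos by (intro add_nonneg_nonneg mult_nonneg_nonneg) auto
  then have "real_of_int ((m^2 + n^2)^3) \<le> real_of_int (16 * A m n)"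
    unfolding A_def x_def y_def by simp
  then show ?thesis
    by linarith
qed

lemma int_square_less_9_cases:
  fixes x :: int
  assumes "x^2 < 9"
  shows "x = -2 \<or> x = -1 \<or> x = 0 \<or> x = 1 \<or> x = 2"
proof -
  have "\<bar>x\<bar> < 3"
    using assms abs_le_square_iff[of 3 x] by auto
  then show ?thesis
    by auto
qed

theorem theorem4:
  fixes m n :: int
  assumes "coprime m n" and "m * n * (m + n) \<noteq> 0"
  shows "A m n \<ge> 29 \<and>
         (A m n = 29 \<longrightarrow> - (of_int (A m n) / of_int (B m n)) = (- 29 / 16 :: rat))"
proof (cases "m^2 + n^2 \<ge> 8")
  case True
  then have "(8::int)^3 \<le> (m^2 + n^2)^3"
    by (intro power_mono) auto
  with cube_sum_squares_le_16_A[of m n] have "A m n \<ge> 32"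
    by simp
  then show ?thesis
    by simp
next
  case False
  then have "m^2 < 9" "n^2 < 9"
    using zero_le_power2[of m] zero_le_power2[of n] by linarith+
  then have "m = -2 \<or> m = -1 \<or> m = 0 \<or> m = 1 \<or> m = 2" "n = -2 \<or> n = -1 \<or> n = 0 \<or> n = 1 \<or> n = 2"
    by (simp_all only: int_square_less_9_cases)
  then show ?thesis
    using assms by (elim disjE) (simp_all add: A_def B_def)
qed

end
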